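(* Let $\Phi$ be a satisfiable 2-CNF and $\mathcal L_0$ any set of literals. Let $\Phi-\mathcal C(\Phi,\mathcal L_0)$ denote the formula obtained from $\Phi$ by deleting the clauses in $\mathcal C(\Phi,\mathcal L_0)$. Then $$Z\big(\Phi-\mathcal C(\Phi,\mathcal L_0)\big)\le 2^{|\mathcal V(\Phi,\mathcal L_0)|\cdot\mathbb 1\{\mathcal C(\Phi,\mathcal L_0)\ne\emptyset\}}\,Z(\Phi).$$
   Context: A 2-CNF is a conjunction of clauses, each the disjunction of two literals on two distinct variables. $Z(\cdot)$ is the number of satisfying assignments. For a literal $l$, $|l|$ denotes its underlying variable. $\mathcal L(\Phi,\mathcal L_0)$ is the output of Unit Clause Propagation: start from $\mathcal L=\mathcal L_0$ and, while $\Phi$ has a clause $l\vee\neg l'$ with $l'\in\mathcal L$ and $l\notin\mathcal L$, add $l$. Then: - $\mathcal V(\Phi,\mathcal L_0)=\{|l|:l\in\mathcal L(\Phi,\mathcal L_0)\}$; - $\mathcal V_0(\Phi,\mathcal L_0)$ is the set of $x$ with both $x,\neg x\in\mathcal L(\Phi,\mathcal L_0)$; - $\mathcal C(\Phi,\mathcal L_0)$ is the set of clauses of $\Phi$ all of whose variables lie in $\mathcal V_0(\Phi,\mathcal L_0)$. *)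

theory Defs
  imports Main
begin

datatype 'v lit = Pos 'v | Neg 'v

fun var :: "'v lit \<Rightarrow> 'v" where
  "var (Pos x) = x" | "var (Neg x) = x"

fun neg :: "'v lit \<Rightarrow> 'v lit" where
  "neg (Pos x) = Neg x" | "neg (Neg x) = Pos x"

type_synonym 'v clause = "'v lit \<times> 'v lit"
type_synonym 'v cnf = "'v clause set"

definition clause_lits :: "'v clause \<Rightarrow> 'v lit set" where
  "clause_lits c = {fst c, snd c}"

definition is_2cnf :: "'v cnf \<Rightarrow> bool" where
  "is_2cnf \<Phi> \<longleftrightarrow> (\<forall>c\<in>\<Phi>. var (fst c) \<noteq> var (snd c))"

fun lit_val :: "('v \<Rightarrow> bool) \<Rightarrow> 'v lit \<Rightarrow> bool" where
  "lit_val \<sigma> (Pos x) = \<sigma> x" | "lit_val \<sigma> (Neg x) = (\<not> \<sigma> x)"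

definition sat :: "('v \<Rightarrow> bool) \<Rightarrow> 'v cnf \<Rightarrow> bool" where
  "sat \<sigma> \<Phi> \<longleftrightarrow> (\<forall>c\<in>\<Phi>. lit_val \<sigma> (fst c) \<or> lit_val \<sigma> (snd c))"

definition Z :: "('v::finite) cnf \<Rightarrow> nat" where
  "Z \<Phi> = card {\<sigma> :: 'v \<Rightarrow> bool. sat \<sigma> \<Phi>}"

text \<open>Output of unit clause propagation: the least superset of L0 closed under
  adding l whenever some clause is l \<or> \<not>l' with l' already present.\<close>
inductive_set ucp :: "'v cnf \<Rightarrow> 'v lit set \<Rightarrow> 'v lit set" for \<Phi> L0 where
  base: "l \<in> L0 \<Longrightarrow> l \<in> ucp \<Phi> L0"
| step: "c \<in> \<Phi> \<Longrightarrow> clause_lits c = {l, neg l'} \<Longrightarrow> l' \<in> ucp \<Phi> L0 \<Longrightarrow> l \<in> ucp \<Phi> L0"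

definition ucpV :: "'v cnf \<Rightarrow> 'v lit set \<Rightarrow> 'v set" where
  "ucpV \<Phi> L0 = var ` ucp \<Phi> L0"

definition ucpV0 :: "'v cnf \<Rightarrow> 'v lit set \<Rightarrow> 'v set" where
  "ucpV0 \<Phi> L0 = {x. Pos x \<in> ucp \<Phi> L0 \<and> Neg x \<in> ucp \<Phi> L0}"

definition ucpC :: "'v cnf \<Rightarrow> 'v lit set \<Rightarrow> 'v cnf" where
  "ucpC \<Phi> L0 = {c \<in> \<Phi>. var (fst c) \<in> ucpV0 \<Phi> L0 \<and> var (snd c) \<in> ucpV0 \<Phi> L0}"

end

theory Submission
  imports Defs
begin

text \<open>Fix a satisfying assignment \<open>\<tau>\<close> of \<open>\<Phi>\<close> and write \<open>L\<close> for the propagated literals.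
  Any assignment \<open>\<sigma>\<close> satisfying \<open>\<Phi> - \<C>\<close> is repaired to a model of \<open>\<Phi>\<close> by copying \<open>\<tau>\<close>
  on \<open>\<V>\<^sub>0\<close> and making every literal of \<open>L\<close> over \<open>\<V> - \<V>\<^sub>0\<close> true; clauses meeting \<open>\<V>\<close>
  but not contained in \<open>\<V>\<^sub>0\<close> then contain such a literal, because \<open>L\<close> is closed under
  propagation. The repair changes only variables of \<open>\<V>\<close>, so each model of \<open>\<Phi>\<close> is hit by
  at most \<open>2^|\<V>|\<close> assignments \<open>\<sigma>\<close>.\<close>

lemma var_neg [simp]: "var (neg a) = var a"
  by (cases a) auto

lemma neg_neg [simp]: "neg (neg a) = a"
  by (cases a) auto

lemma ucp_clause_fst:
  assumes "(a, b) \<in> \<Phi>" "neg b \<in> ucp \<Phi> L0"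
  shows "a \<in> ucp \<Phi> L0"
  by (rule ucp.step[OF assms(1) _ assms(2)]) (simp add: clause_lits_def)

lemma ucp_clause_snd:
  assumes "(a, b) \<in> \<Phi>" "neg a \<in> ucp \<Phi> L0"
  shows "b \<in> ucp \<Phi> L0"
  by (rule ucp.step[OF assms(1) _ assms(2)]) (auto simp: clause_lits_def)

lemma var_eq_var_iff: "var l = var a \<longleftrightarrow> l = a \<or> l = neg a"
  by (cases l; cases a) auto

lemma var_in_ucpV_iff: "var a \<in> ucpV \<Phi> L0 \<longleftrightarrow> a \<in> ucp \<Phi> L0 \<or> neg a \<in> ucp \<Phi> L0"
  unfolding ucpV_def by (auto simp: var_eq_var_iff intro: rev_image_eqI[where x = "neg a"])

lemma var_in_ucpV0_iff: "var a \<in> ucpV0 \<Phi> L0 \<longleftrightarrow> a \<in> ucp \<Phi> L0 \<and> neg a \<in> ucp \<Phi> L0"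
  by (cases a) (auto simp: ucpV0_def)

lemma ucpV0_subset_ucpV: "ucpV0 \<Phi> L0 \<subseteq> ucpV \<Phi> L0"
  unfolding ucpV0_def ucpV_def by force

lemma ucp_clause_has_uncontradicted_lit:
  assumes c: "(a, b) \<in> \<Phi>"
    and meets: "var a \<in> ucpV \<Phi> L0 \<or> var b \<in> ucpV \<Phi> L0"
    and not_in_V0: "\<not> (var a \<in> ucpV0 \<Phi> L0 \<and> var b \<in> ucpV0 \<Phi> L0)"
  shows "a \<in> ucp \<Phi> L0 \<and> neg a \<notin> ucp \<Phi> L0 \<or> b \<in> ucp \<Phi> L0 \<and> neg b \<notin> ucp \<Phi> L0"
proof -
  note propagation = ucp_clause_fst[OF c] ucp_clause_snd[OF c]
  have "a \<in> ucp \<Phi> L0 \<or> b \<in> ucp \<Phi> L0"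
    using meets propagation by (auto simp: var_in_ucpV_iff)
  then show ?thesis
    using not_in_V0 propagation by (auto simp: var_in_ucpV0_iff)
qed

definition ucp_repair :: "('v \<Rightarrow> bool) \<Rightarrow> 'v cnf \<Rightarrow> 'v lit set \<Rightarrow> ('v \<Rightarrow> bool) \<Rightarrow> 'v \<Rightarrow> bool"
  where "ucp_repair \<tau> \<Phi> L0 \<sigma> x =
    (if x \<in> ucpV0 \<Phi> L0 then \<tau> x else if x \<in> ucpV \<Phi> L0 then Pos x \<in> ucp \<Phi> L0 else \<sigma> x)"

lemma ucp_repair_outside_ucpV:
  "x \<notin> ucpV \<Phi> L0 \<Longrightarrow> ucp_repair \<tau> \<Phi> L0 \<sigma> x = \<sigma> x"
  using ucpV0_subset_ucpV[of \<Phi> L0] by (auto simp: ucp_repair_def)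

lemma lit_val_ucp_repair_ucpV0:
  "var a \<in> ucpV0 \<Phi> L0 \<Longrightarrow> lit_val (ucp_repair \<tau> \<Phi> L0 \<sigma>) a = lit_val \<tau> a"
  by (cases a) (auto simp: ucp_repair_def)

lemma lit_val_ucp_repair_uncontradicted:
  assumes "a \<in> ucp \<Phi> L0" "neg a \<notin> ucp \<Phi> L0"
  shows "lit_val (ucp_repair \<tau> \<Phi> L0 \<sigma>) a"
proof -
  have "var a \<in> ucpV \<Phi> L0"
    using assms(1) by (auto simp: var_in_ucpV_iff)
  then show ?thesis
    using assms by (cases a) (auto simp: ucp_repair_def ucpV0_def)
qed

lemma lit_val_ucp_repair_outside_ucpV:
  "var a \<notin> ucpV \<Phi> L0 \<Longrightarrow> lit_val (ucp_repair \<tau> \<Phi> L0 \<sigma>) a = lit_val \<sigma> a"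
  by (cases a) (auto simp: ucp_repair_outside_ucpV)

lemma sat_ucp_repair:
  assumes \<tau>: "sat \<tau> \<Phi>" and \<sigma>: "sat \<sigma> (\<Phi> - ucpC \<Phi> L0)"
  shows "sat (ucp_repair \<tau> \<Phi> L0 \<sigma>) \<Phi>"
  unfolding sat_def
proof (intro ballI)
  fix c assume "c \<in> \<Phi>"
  then obtain a b where c: "c = (a, b)" "(a, b) \<in> \<Phi>"
    by (cases c) auto
  let ?\<rho> = "ucp_repair \<tau> \<Phi> L0 \<sigma>"
  consider (in_V0) "var a \<in> ucpV0 \<Phi> L0 \<and> var b \<in> ucpV0 \<Phi> L0"
    | (outside_V) "var a \<notin> ucpV \<Phi> L0 \<and> var b \<notin> ucpV \<Phi> L0"
    | (meets_V) "var a \<in> ucpV \<Phi> L0 \<or> var b \<in> ucpV \<Phi> L0"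
      "\<not> (var a \<in> ucpV0 \<Phi> L0 \<and> var b \<in> ucpV0 \<Phi> L0)"
    by blast
  then show "lit_val ?\<rho> (fst c) \<or> lit_val ?\<rho> (snd c)"
  proof cases
    case in_V0
    then show ?thesis
      using \<tau> c by (auto simp: sat_def lit_val_ucp_repair_ucpV0)
  next
    case outside_V
    then have "(a, b) \<in> \<Phi> - ucpC \<Phi> L0"
      using c ucpV0_subset_ucpV[of \<Phi> L0] by (auto simp: ucpC_def)
    then have "lit_val \<sigma> a \<or> lit_val \<sigma> b"
      using \<sigma> unfolding sat_def by (metis fst_conv snd_conv)
    then show ?thesis
      using outside_V c by (simp add: lit_val_ucp_repair_outside_ucpV)
  next
    case meets_V
    then have "lit_val ?\<rho> a \<or> lit_val ?\<rho> b"
      using ucp_clause_has_uncontradicted_lit[OF c(2)] lit_val_ucp_repair_uncontradicted by blast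
    then show ?thesis
      using c by simp
  qed
qed

lemma card_le_two_pow_mult_card_if_changes_within:
  fixes f :: "('a::finite \<Rightarrow> bool) \<Rightarrow> 'a \<Rightarrow> bool"
  assumes maps_to: "f ` A \<subseteq> B"
    and changes_within: "\<And>\<sigma> x. \<sigma> \<in> A \<Longrightarrow> x \<notin> V \<Longrightarrow> f \<sigma> x = \<sigma> x"
  shows "card A \<le> 2 ^ card V * card B"
proof -
  define fibre where "fibre t = {\<sigma> \<in> A. f \<sigma> = t}" for t
  have card_fibre: "card (fibre t) \<le> 2 ^ card V" for t
  proof -
    have "inj_on (\<lambda>\<sigma>. {x \<in> V. \<sigma> x}) (fibre t)"
    proof (rule inj_onI, rule ext)
      fix \<sigma>1 \<sigma>2 x
      assume \<sigma>1: "\<sigma>1 \<in> fibre t" and \<sigma>2: "\<sigma>2 \<in> fibre t"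
        and same_on_V: "{x \<in> V. \<sigma>1 x} = {x \<in> V. \<sigma>2 x}"
      show "\<sigma>1 x = \<sigma>2 x"
      proof (cases "x \<in> V")
        case True
        have "x \<in> {x \<in> V. \<sigma>1 x} \<longleftrightarrow> x \<in> {x \<in> V. \<sigma>2 x}"
          using same_on_V by simp
        then show ?thesis
          using True by simp
      next
        case False
        have "\<sigma>1 \<in> A" "\<sigma>2 \<in> A" "f \<sigma>1 = f \<sigma>2"
          using \<sigma>1 \<sigma>2 unfolding fibre_def by simp_all
        then show ?thesis
          using changes_within[OF _ False] by metis
      qed
    qed
    then have "card (fibre t) \<le> card (Pow V)"
      by (rule card_inj_on_le) auto
    then show ?thesis
      by (simp add: card_Pow)
  qed
  have "card A \<le> card (\<Union>t\<in>B. fibre t)"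
    using maps_to by (intro card_mono) (auto simp: fibre_def)
  also have "\<dots> \<le> (\<Sum>t\<in>B. card (fibre t))"
    by (rule card_UN_le) simp
  also have "\<dots> \<le> (\<Sum>t\<in>B. 2 ^ card V)"
    by (rule sum_mono) (rule card_fibre)
  also have "\<dots> = 2 ^ card V * card B"
    by simp
  finally show ?thesis .
qed

theorem lemma5p1:
  fixes \<Phi> :: "('v::finite) cnf" and L0 :: "'v lit set"
  assumes "is_2cnf \<Phi>"
    and "\<exists>\<sigma>. sat \<sigma> \<Phi>"
  shows "Z (\<Phi> - ucpC \<Phi> L0)
           \<le> 2 ^ (card (ucpV \<Phi> L0) * (if ucpC \<Phi> L0 \<noteq> {} then 1 else 0)) * Z \<Phi>"
proof (cases "ucpC \<Phi> L0 = {}")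
  case False
  obtain \<tau> where \<tau>: "sat \<tau> \<Phi>"
    using assms(2) by blast
  have "card {\<sigma>. sat \<sigma> (\<Phi> - ucpC \<Phi> L0)} \<le> 2 ^ card (ucpV \<Phi> L0) * card {\<sigma>. sat \<sigma> \<Phi>}"
  proof (rule card_le_two_pow_mult_card_if_changes_within)
    show "ucp_repair \<tau> \<Phi> L0 ` {\<sigma>. sat \<sigma> (\<Phi> - ucpC \<Phi> L0)} \<subseteq> {\<sigma>. sat \<sigma> \<Phi>}"
      using sat_ucp_repair[OF \<tau>] by blast
  qed (rule ucp_repair_outside_ucpV)
  then show ?thesis
    using False by (simp add: Z_def)
qed simp

end
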